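(* Let $k,n\in\mathbb{N}$. There exist a column dimension $m=\Theta(n)$, a reference matrix $W_0\in\mathbb{R}^{k\times m}$, a convex and $1$-Lipschitz loss function $\ell:\mathbb{R}^k\to\mathbb{R}$, and a distribution $\mathcal{D}$ over vectors $x\in\mathbb{R}^m$ with $\|x\|\le 1$, such that in the vector-valued prediction problem parameterized by $W_0,\mathcal{D},\ell$, with constant probability over the draw of the training set $S\sim\mathcal{D}^n$ there exists an empirical risk minimizer $\widehat{W}_*$ satisfying $$L(\widehat{W}_* )-L(W^* )=\widetilde{\Omega}\big(\sqrt{k/n}\big).$$
   Context: Vector-valued prediction (VVP) problem: given a distribution $\mathcal{D}$ over $x\in\mathbb{R}^m$ with $\|x\|\le1$, a loss $\ell:\mathbb{R}^k\to\mathbb{R}$, and a reference matrix $W_0\in\mathbb{R}^{k\times m}$, the hypothesis set is the Frobenius ball $\{W\in\mathbb{R}^{k\times m}:\|W-W_0\|_F\le1\}$. The population risk is $L(W)=\mathbb{E}_{x\sim\mathcal{D}}[\ell(Wx)]$, and for a sample $S=\{x_1,\dots,x_n\}$ drawn i.i.d. from $\mathcal{D}$ the empirical risk is $\widehat{L}(W)=\frac1n\sum_{i=1}^n\ell(Wx_i)$. $W^*$ denotes a minimizer of $L$ over the Frobenius ball, and an empirical risk minimizer (ERM) $\widehat{W}_*$ is any minimizer of $\widehat{L}$ over the Frobenius ball. $\widetilde{\Omega}$ hides logarithmic factors. *)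

theory Defs
  imports "HOL-Probability.Probability"
begin

text \<open>Vectors in R^d are represented as functions nat => real vanishing at indices >= d;
  k x m matrices as functions nat => nat => real vanishing outside {..<k} x {..<m}.\<close>

definition vecs :: "nat \<Rightarrow> (nat \<Rightarrow> real) set" where
  "vecs d = {x. \<forall>j\<ge>d. x j = 0}"

definition mats :: "nat \<Rightarrow> nat \<Rightarrow> (nat \<Rightarrow> nat \<Rightarrow> real) set" where
  "mats k m = {W. \<forall>i j. (k \<le> i \<or> m \<le> j) \<longrightarrow> W i j = 0}"

definition enorm :: "nat \<Rightarrow> (nat \<Rightarrow> real) \<Rightarrow> real" where
  "enorm d x = sqrt (\<Sum>j<d. (x j)^2)"

definition frob_dist :: "nat \<Rightarrow> nat \<Rightarrow> (nat \<Rightarrow> nat \<Rightarrow> real) \<Rightarrow> (nat \<Rightarrow> nat \<Rightarrow> real) \<Rightarrow> real" where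
  "frob_dist k m W V = sqrt (\<Sum>i<k. \<Sum>j<m. (W i j - V i j)^2)"

definition mv :: "nat \<Rightarrow> nat \<Rightarrow> (nat \<Rightarrow> nat \<Rightarrow> real) \<Rightarrow> (nat \<Rightarrow> real) \<Rightarrow> (nat \<Rightarrow> real)" where
  "mv k m W x = (\<lambda>i. if i < k then (\<Sum>j<m. W i j * x j) else 0)"

definition hyp_ball :: "nat \<Rightarrow> nat \<Rightarrow> (nat \<Rightarrow> nat \<Rightarrow> real) \<Rightarrow> (nat \<Rightarrow> nat \<Rightarrow> real) set" where
  "hyp_ball k m W0 = {W \<in> mats k m. frob_dist k m W W0 \<le> 1}"

definition convex_loss :: "nat \<Rightarrow> ((nat \<Rightarrow> real) \<Rightarrow> real) \<Rightarrow> bool" where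
  "convex_loss k l \<longleftrightarrow> (\<forall>u\<in>vecs k. \<forall>v\<in>vecs k. \<forall>t::real. 0 \<le> t \<and> t \<le> 1 \<longrightarrow>
      l (\<lambda>i. t * u i + (1 - t) * v i) \<le> t * l u + (1 - t) * l v)"

definition lipschitz1_loss :: "nat \<Rightarrow> ((nat \<Rightarrow> real) \<Rightarrow> real) \<Rightarrow> bool" where
  "lipschitz1_loss k l \<longleftrightarrow> (\<forall>u\<in>vecs k. \<forall>v\<in>vecs k. \<bar>l u - l v\<bar> \<le> enorm k (\<lambda>i. u i - v i))"

definition pop_risk :: "nat \<Rightarrow> nat \<Rightarrow> ((nat \<Rightarrow> real) \<Rightarrow> real) \<Rightarrow> (nat \<Rightarrow> real) measure
    \<Rightarrow> (nat \<Rightarrow> nat \<Rightarrow> real) \<Rightarrow> real" where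
  "pop_risk k m l D W = (\<integral>x. l (mv k m W x) \<partial>D)"

definition emp_risk :: "nat \<Rightarrow> nat \<Rightarrow> ((nat \<Rightarrow> real) \<Rightarrow> real) \<Rightarrow> nat \<Rightarrow> (nat \<Rightarrow> (nat \<Rightarrow> real))
    \<Rightarrow> (nat \<Rightarrow> nat \<Rightarrow> real) \<Rightarrow> real" where
  "emp_risk k m l n S W = (\<Sum>i<n. l (mv k m W (S i))) / real n"

end

theory Submission
  imports Defs "HOL-Library.FuncSet"
begin

lemma card_large_subsets:
  assumes "finite M"
  shows "2 ^ card M \<le> 2 * card {c. c \<subseteq> M \<and> card M \<le> 2 * card c}"
proof -
  define Large where "Large = {c. c \<subseteq> M \<and> card M \<le> 2 * card c}"
  define Small where "Small = {c. c \<subseteq> M \<and> 2 * card c < card M}"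
  have fin: "finite Large" "finite Small"
    using assms unfolding Large_def Small_def by auto
  have "Pow M = Large \<union> Small" "Large \<inter> Small = {}"
    unfolding Large_def Small_def by auto
  then have "card (Pow M) = card Large + card Small"
    using card_Un_disjoint[OF fin] by simp
  then have split: "2 ^ card M = card Large + card Small"
    using card_Pow[of M] assms by simp
  have "inj_on (\<lambda>c. M - c) Small"
    unfolding Small_def inj_on_def by blast
  moreover have "(\<lambda>c. M - c) ` Small \<subseteq> Large"
    using assms by (auto simp: Small_def Large_def card_Diff_subset finite_subset)
  ultimately have "card Small \<le> card Large"
    using card_inj_on_le fin by blast
  then show ?thesis
    using split unfolding Large_def by simp
qed

lemma card_subsets_card_le:
  "card {w \<in> Pow A. card w \<le> r} = (\<Sum>i\<le>r. card A choose i)" if "finite A"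
proof -
  have "{w \<in> Pow A. card w \<le> r} = (\<Union>i\<le>r. {w. w \<subseteq> A \<and> card w = i})"
    by auto
  also have "card \<dots> = (\<Sum>i\<le>r. card {w. w \<subseteq> A \<and> card w = i})"
    using that by (intro card_UN_disjoint) auto
  finally show ?thesis
    using n_subsets[OF that] by simp
qed

lemma card_hamming_ball:
  assumes "u \<subseteq> {..<h}"
  shows "card {v \<in> Pow {..<h}. card (sym_diff u v) \<le> r} = (\<Sum>i\<le>r. h choose i)"
proof -
  have involution: "sym_diff u (sym_diff u v) = v" for v
    by blast
  have "bij_betw (sym_diff u) {v \<in> Pow {..<h}. card (sym_diff u v) \<le> r} {w \<in> Pow {..<h}. card w \<le> r}"
  proof (rule bij_betw_byWitness[where f' = "sym_diff u"])
    show "sym_diff u ` {v \<in> Pow {..<h}. card (sym_diff u v) \<le> r} \<subseteq> {w \<in> Pow {..<h}. card w \<le> r}"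
      using assms by blast
    show "sym_diff u ` {w \<in> Pow {..<h}. card w \<le> r} \<subseteq> {v \<in> Pow {..<h}. card (sym_diff u v) \<le> r}"
      using assms by (auto simp only: involution)
  qed (simp_all only: involution, blast+)
  then show ?thesis
    using bij_betw_same_card card_subsets_card_le[of "{..<h}" r] by fastforce
qed

lemma sum_binomial_le: "(\<Sum>i\<le>r. real (h choose i)) \<le> 3 ^ r * (4/3) ^ h"
proof -
  define f where "f i = (1/3) ^ i * real (h choose i)" for i
  have "(\<Sum>i\<le>r. real (h choose i)) \<le> (\<Sum>i\<le>r. 3 ^ r * f i)"
  proof (rule sum_mono)
    fix i assume "i \<in> {..r}"
    then have "(3::real) ^ r * (1/3) ^ i = 3 ^ (r - i)"
      by (simp add: power_diff power_one_over)
    then have "1 \<le> (3::real) ^ r * (1/3) ^ i"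
      by simp
    then have "1 * real (h choose i) \<le> (3 ^ r * (1/3) ^ i) * real (h choose i)"
      by (rule mult_right_mono) simp
    then show "real (h choose i) \<le> 3 ^ r * f i"
      unfolding f_def by (simp only: mult_1_left mult.assoc)
  qed
  also have "\<dots> = 3 ^ r * (\<Sum>i\<le>r. f i)"
    by (simp add: sum_distrib_left)
  also have "(\<Sum>i\<le>r. f i) \<le> (\<Sum>i\<le>r + h. f i)"
    by (rule sum_mono2) (auto simp: f_def)
  also have "\<dots> = (\<Sum>i\<le>h. f i)"
    by (rule sum.mono_neutral_right) (auto simp: f_def)
  also have "\<dots> = (4/3) ^ h"
    using binomial_ring[of "1/3::real" 1 h] by (simp add: f_def mult.commute)
  finally show ?thesis
    by (simp add: mult_left_mono)
qed

lemma card_PiE_two_slots: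
  assumes "finite I" "a \<in> I" "b \<in> I" "a \<noteq> b"
  shows "card (PiE I (\<lambda>i. if i = a then {u} else if i = b then V else U))
    = card V * card U ^ (card I - 2)"
proof -
  let ?X = "\<lambda>i. if i = a then {u} else if i = b then V else U"
  have rest: "card (I - {a} - {b}) = card I - 2"
    using assms by (simp add: card_Diff_singleton_if)
  have "card (PiE I ?X) = card (?X a) * (\<Prod>i\<in>I - {a}. card (?X i))"
    using assms by (simp add: card_PiE prod.remove)
  also have "(\<Prod>i\<in>I - {a}. card (?X i)) = card (?X b) * (\<Prod>i\<in>I - {a} - {b}. card (?X i))"
    using assms by (intro prod.remove) auto
  also have "(\<Prod>i\<in>I - {a} - {b}. card (?X i)) = card U ^ (card I - 2)"
    using rest by simp
  finally show ?thesis
    using assms by simp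
qed

lemma card_tuples_with_close_pair:
  assumes "finite U" and "\<And>u. u \<in> U \<Longrightarrow> Nb u \<subseteq> U" and "\<And>u. u \<in> U \<Longrightarrow> card (Nb u) \<le> B"
  shows "card {f \<in> PiE {..<N} (\<lambda>_. U). \<exists>a<N. \<exists>b<N. a \<noteq> b \<and> f b \<in> Nb (f a)}
    \<le> N * N * (card U * (B * card U ^ (N - 2)))"
proof -
  define X where "X a b u = PiE {..<N} (\<lambda>i. if i = a then {u} else if i = b then Nb u else U)"
    for a b u
  have finX: "finite (X a b u)" if "u \<in> U" for a b u
    using assms(1) finite_subset[OF assms(2)[OF that]] unfolding X_def
    by (intro finite_PiE) auto
  have cardX: "card (X a b u) \<le> B * card U ^ (N - 2)" if "a < N" "b < N" "a \<noteq> b" "u \<in> U"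
    for a b u
    using that assms(3)[OF that(4)] unfolding X_def by (simp add: card_PiE_two_slots)
  have "{f \<in> PiE {..<N} (\<lambda>_. U). \<exists>a<N. \<exists>b<N. a \<noteq> b \<and> f b \<in> Nb (f a)}
      \<subseteq> (\<Union>a<N. \<Union>b\<in>{..<N} - {a}. \<Union>u\<in>U. X a b u)"
  proof
    fix f assume "f \<in> {f \<in> PiE {..<N} (\<lambda>_. U). \<exists>a<N. \<exists>b<N. a \<noteq> b \<and> f b \<in> Nb (f a)}"
    then obtain a b where "f \<in> PiE {..<N} (\<lambda>_. U)" "a < N" "b < N" "a \<noteq> b" "f b \<in> Nb (f a)"
      by blast
    then have "f \<in> X a b (f a)" "f a \<in> U"
      unfolding X_def by (auto simp: PiE_iff)
    with \<open>a < N\<close> \<open>b < N\<close> \<open>a \<noteq> b\<close> show "f \<in> (\<Union>a<N. \<Union>b\<in>{..<N} - {a}. \<Union>u\<in>U. X a b u)"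
      by blast
  qed
  then have "card {f \<in> PiE {..<N} (\<lambda>_. U). \<exists>a<N. \<exists>b<N. a \<noteq> b \<and> f b \<in> Nb (f a)}
      \<le> card (\<Union>a<N. \<Union>b\<in>{..<N} - {a}. \<Union>u\<in>U. X a b u)"
    by (rule card_mono[rotated]) (simp add: finX assms(1))
  also have "\<dots> \<le> (\<Sum>a<N. card (\<Union>b\<in>{..<N} - {a}. \<Union>u\<in>U. X a b u))"
    by (rule card_UN_le) simp
  also have "\<dots> \<le> (\<Sum>a<N. \<Sum>b\<in>{..<N} - {a}. card (\<Union>u\<in>U. X a b u))"
    by (intro sum_mono card_UN_le) simp
  also have "\<dots> \<le> (\<Sum>a<N. \<Sum>b\<in>{..<N} - {a}. \<Sum>u\<in>U. card (X a b u))"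
    by (intro sum_mono card_UN_le) (simp add: assms(1))
  also have "\<dots> \<le> (\<Sum>a<N. \<Sum>b\<in>{..<N} - {a}. \<Sum>u\<in>U. B * card U ^ (N - 2))"
    by (intro sum_mono cardX) auto
  also have "\<dots> = (\<Sum>a<N. (N - 1) * (card U * (B * card U ^ (N - 2))))"
    by (intro sum.cong refl) (simp add: card_Diff_singleton)
  also have "\<dots> = N * (N - 1) * (card U * (B * card U ^ (N - 2)))"
    by simp
  also have "\<dots> \<le> N * N * (card U * (B * card U ^ (N - 2)))"
    by (intro mult_le_mono1 mult_le_mono2) simp
  finally show ?thesis .
qed

lemma card_tuples_avoiding:
  assumes "finite I" "finite U" "finite Zs" "\<And>Z. Z \<in> Zs \<Longrightarrow> Good Z \<subseteq> U"
  shows "card {f \<in> PiE I (\<lambda>_. U). \<exists>Z\<in>Zs. \<forall>a\<in>I. f a \<notin> Good Z}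
    \<le> (\<Sum>Z\<in>Zs. (card U - card (Good Z)) ^ card I)"
proof -
  have "{f \<in> PiE I (\<lambda>_. U). \<exists>Z\<in>Zs. \<forall>a\<in>I. f a \<notin> Good Z} \<subseteq> (\<Union>Z\<in>Zs. PiE I (\<lambda>_. U - Good Z))"
    by (auto simp: PiE_iff) blast
  then have "card {f \<in> PiE I (\<lambda>_. U). \<exists>Z\<in>Zs. \<forall>a\<in>I. f a \<notin> Good Z}
      \<le> card (\<Union>Z\<in>Zs. PiE I (\<lambda>_. U - Good Z))"
    by (rule card_mono[rotated]) (simp add: assms finite_PiE)
  also have "\<dots> \<le> (\<Sum>Z\<in>Zs. card (PiE I (\<lambda>_. U - Good Z)))"
    by (rule card_UN_le) (fact assms)
  also have "\<dots> = (\<Sum>Z\<in>Zs. (card U - card (Good Z)) ^ card I)"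
  proof (rule sum.cong[OF refl])
    fix Z assume "Z \<in> Zs"
    then have "card (U - Good Z) = card U - card (Good Z)"
      using assms(2,4) by (meson card_Diff_subset finite_subset)
    then show "card (PiE I (\<lambda>_. U - Good Z)) = (card U - card (Good Z)) ^ card I"
      using assms(1) by (simp add: card_PiE)
  qed
  finally show ?thesis .
qed

lemma collision_count_bound:
  fixes h :: nat
  assumes "64 \<le> h"
  shows "(16::real) ^ (h div 64) * (3 ^ (h div 4) * (4/3) ^ h) \<le> 2 ^ h / 4"
proof -
  define a where "a = h div 4"
  define q where "q = h div 64"
  have a16: "16 * q \<le> a" and q1: "1 \<le> q" and h4: "4 * a \<le> h"
    using assms unfolding q_def a_def by (auto simp: div_mult2_eq[symmetric])
  have "(3::real) * (2/3) ^ 4 = 16/27"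
    by (simp add: power_divide)
  then have shrink: "(3::real) ^ a * ((2/3) ^ 4) ^ a = (16/27) ^ a"
    by (metis power_mult_distrib)
  have "(16::real) ^ q * (3 ^ a * (2/3) ^ h) \<le> 16 ^ q * (3 ^ a * (2/3) ^ (4 * a))"
    using h4 by (intro mult_left_mono power_decreasing) auto
  also have "\<dots> = 16 ^ q * (16/27) ^ a"
    by (simp only: power_mult shrink)
  also have "\<dots> \<le> 16 ^ q * (16/27) ^ (16 * q)"
    using a16 by (intro mult_left_mono power_decreasing) auto
  also have "\<dots> = (16 * (16/27) ^ 16) ^ q"
    by (simp only: power_mult power_mult_distrib)
  also have "\<dots> \<le> (1/4) ^ q"
    by (rule power_mono) (simp_all add: power_divide)
  also have "\<dots> \<le> 1/4"
    using power_decreasing[OF q1, of "1/4::real"] by simp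
  finally have "2 ^ h * ((16::real) ^ q * (3 ^ a * (2/3) ^ h)) \<le> 2 ^ h * (1/4)"
    by (intro mult_left_mono) auto
  moreover have "(4/3::real) ^ h = 2 ^ h * (2/3) ^ h"
    by (simp only: power_mult_distrib[symmetric]) simp
  ultimately show ?thesis
    unfolding a_def[symmetric] q_def[symmetric] by (simp only: ac_simps)
qed

lemma one_minus_inverse_pow_le_half:
  assumes "1 \<le> M"
  shows "(1 - 1 / real M) ^ M \<le> 1/2"
proof -
  have "(1 - 1 / real M) ^ M \<le> exp (- (1 / real M)) ^ M"
    using assms exp_ge_add_one_self[of "- (1 / real M)"] by (intro power_mono) auto
  also have "\<dots> = exp (- 1)"
    using assms by (simp add: exp_of_nat_mult[symmetric])
  also have "\<dots> \<le> 1/2"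
    using exp_ge_add_one_self[of "1::real"] by (simp add: exp_minus field_simps)
  finally show ?thesis .
qed

lemma linear_le_pow2: "11 \<le> q \<Longrightarrow> 64 * q + 64 \<le> (2::nat) ^ (q - 1)"
proof (induction q rule: dec_induct)
  case (step q)
  then have "2 ^ (Suc q - 1) = 2 * (2::nat) ^ (q - 1)"
    by (cases q) auto
  then show ?case
    using step by simp
qed simp

lemma missing_count_bound:
  fixes h q :: nat
  assumes "11 \<le> q" "h \<le> 64 * q + 63"
  shows "(2::real) ^ h * (1 - 1 / 2 ^ (q + 1)) ^ (4 ^ q) \<le> 1/2"
proof -
  define M :: nat where "M = 2 ^ (q + 1)"
  have M_real: "real M = 2 ^ (q + 1)"
    by (simp add: M_def)
  have "(4::nat) ^ q = 2 ^ (2 * q)"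
    by (simp add: power_mult)
  also have "2 * q = (q + 1) + (q - 1)"
    using assms(1) by simp
  finally have split: "(4::nat) ^ q = M * 2 ^ (q - 1)"
    unfolding M_def by (simp only: power_add)
  have "(1 - 1 / 2 ^ (q + 1) :: real) ^ (4 ^ q) = ((1 - 1 / real M) ^ M) ^ (2 ^ (q - 1))"
    by (simp only: split M_real power_mult)
  also have "\<dots> \<le> (1/2) ^ (2 ^ (q - 1))"
    by (rule power_mono[OF one_minus_inverse_pow_le_half]) (auto simp: M_def)
  also have "\<dots> \<le> (1/2) ^ (h + 1)"
    using linear_le_pow2[OF assms(1)] assms(2) by (intro power_decreasing) auto
  finally have "(2::real) ^ h * (1 - 1 / 2 ^ (q + 1)) ^ (4 ^ q) \<le> 2 ^ h * (1/2) ^ (h + 1)"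
    by (intro mult_left_mono) auto
  also have "\<dots> = 1/2"
    by (simp add: power_one_over)
  finally show ?thesis .
qed

lemma card_good_codewords:
  assumes "Z \<subseteq> {..<h}" "2 * card Z \<le> h"
  shows "2 ^ h \<le> 2 ^ (card Z + 1) * card {c \<in> Pow {..<h}. c \<inter> Z = {} \<and> h \<le> 4 * card c}"
    (is "_ \<le> _ * card ?Good")
proof -
  define M where "M = {..<h} - Z"
  have cM: "card M = h - card Z"
    unfolding M_def using assms(1) by (simp add: card_Diff_subset finite_subset)
  have "{c. c \<subseteq> M \<and> card M \<le> 2 * card c} \<subseteq> ?Good"
  proof
    fix c assume "c \<in> {c. c \<subseteq> M \<and> card M \<le> 2 * card c}"
    then have "c \<subseteq> {..<h}" "c \<inter> Z = {}" "h - card Z \<le> 2 * card c"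
      unfolding M_def cM[unfolded M_def] by auto
    with assms(2) show "c \<in> ?Good"
      by simp
  qed
  then have "card {c. c \<subseteq> M \<and> card M \<le> 2 * card c} \<le> card ?Good"
    by (rule card_mono[rotated]) simp
  then have large: "2 ^ card M \<le> 2 * card ?Good"
    using card_large_subsets[of M] by (simp add: M_def)
  have "(2::nat) ^ h = 2 ^ card M * 2 ^ card Z"
    using cM assms(2) by (simp flip: power_add)
  also have "\<dots> \<le> 2 * card ?Good * 2 ^ card Z"
    using large by (rule mult_right_mono) simp
  also have "\<dots> = 2 ^ (card Z + 1) * card ?Good"
    by simp
  finally show ?thesis .
qed

lemma card_colliding_tuples:
  assumes "64 \<le> h" "2 \<le> N" "N \<le> 4 ^ (h div 64)"
  shows "real (card {f \<in> PiE {..<N} (\<lambda>_. Pow {..<h}).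
      \<exists>a<N. \<exists>b<N. a \<noteq> b \<and> 4 * card (sym_diff (f a) (f b)) \<le> h}) \<le> (2 ^ h) ^ N / 4"
    (is "real (card ?Colliding) \<le> _")
proof -
  define B where "B = (\<Sum>i\<le>h div 4. h choose i)"
  define Nb where "Nb u = {v \<in> Pow {..<h}. card (sym_diff u v) \<le> h div 4}" for u
  have "?Colliding = {f \<in> PiE {..<N} (\<lambda>_. Pow {..<h}). \<exists>a<N. \<exists>b<N. a \<noteq> b \<and> f b \<in> Nb (f a)}"
  proof -
    have "4 * x \<le> h \<longleftrightarrow> x \<le> h div 4" for x :: nat
      by auto
    then show ?thesis
      unfolding Nb_def by (auto simp: PiE_iff) blast+
  qed
  also have "card \<dots> \<le> N * N * (card (Pow {..<h}) * (B * card (Pow {..<h}) ^ (N - 2)))"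
    using card_hamming_ball[of _ h "h div 4"]
    by (intro card_tuples_with_close_pair) (auto simp: Nb_def B_def)
  also have "\<dots> = N * N * B * (2 ^ h * (2 ^ h) ^ (N - 2))"
    by (simp only: card_Pow card_lessThan finite_lessThan mult.assoc mult.left_commute)
  finally have "real (card ?Colliding) \<le> real (N * N * B * (2 ^ h * (2 ^ h) ^ (N - 2)))"
    by (simp only: of_nat_le_iff)
  also have "\<dots> = real N * real N * real B * (2 ^ h * (2 ^ h) ^ (N - 2))"
    by simp
  also have "\<dots> \<le> 16 ^ (h div 64) * (3 ^ (h div 4) * (4/3) ^ h) * (2 ^ h * (2 ^ h) ^ (N - 2))"
  proof (intro mult_right_mono mult_mono)
    have "real N \<le> real (4 ^ (h div 64))"
      using assms(3) by (simp only: of_nat_le_iff)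
    then have "real N * real N \<le> 4 ^ (h div 64) * 4 ^ (h div 64)"
      by (intro mult_mono) auto
    then show "real N * real N \<le> 16 ^ (h div 64)"
      by (simp flip: power_mult_distrib)
    show "real B \<le> 3 ^ (h div 4) * (4/3) ^ h"
      unfolding B_def using sum_binomial_le by simp
  qed auto
  also have "\<dots> \<le> 2 ^ h / 4 * (2 ^ h * (2 ^ h) ^ (N - 2))"
    by (intro mult_right_mono collision_count_bound assms) auto
  also have "\<dots> = (2 ^ h) ^ N / 4"
  proof -
    have "N = Suc (Suc (N - 2))"
      using assms(2) by simp
    then have "(2::real) ^ h * (2 ^ h * (2 ^ h) ^ (N - 2)) = (2 ^ h) ^ N"
      by (metis power_Suc)
    then show ?thesis
      by (simp only: times_divide_eq_left)
  qed
  finally show ?thesis .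
qed

lemma card_tuples_missing_good_codeword:
  assumes "704 \<le> h" "N = 4 ^ (h div 64)"
  shows "real (card {f \<in> PiE {..<N} (\<lambda>_. Pow {..<h}).
      \<exists>Z\<in>{Z \<in> Pow {..<h}. card Z \<le> h div 64}.
        \<forall>a\<in>{..<N}. f a \<notin> {c \<in> Pow {..<h}. c \<inter> Z = {} \<and> h \<le> 4 * card c}})
    \<le> (2 ^ h) ^ N / 2"
proof -
  define q where "q = h div 64"
  define Zs where "Zs = {Z \<in> Pow {..<h}. card Z \<le> q}"
  define Good where "Good Z = {c \<in> Pow {..<h}. c \<inter> Z = {} \<and> h \<le> 4 * card c}" for Z
  let ?Missing = "{f \<in> PiE {..<N} (\<lambda>_. Pow {..<h}). \<exists>Z\<in>Zs. \<forall>a\<in>{..<N}. f a \<notin> Good Z}"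
  have q11: "11 \<le> q" and hq: "h \<le> 64 * q + 63"
    using assms(1) unfolding q_def by linarith+
  have few_bad: "real (2 ^ h - card (Good Z)) \<le> 2 ^ h * (1 - 1 / 2 ^ (q + 1))" if "Z \<in> Zs" for Z
  proof -
    have "Z \<subseteq> {..<h}" "card Z \<le> q"
      using that unfolding Zs_def by auto
    then have "2 ^ h \<le> 2 ^ (card Z + 1) * card (Good Z)"
      unfolding Good_def by (intro card_good_codewords) (auto simp: q_def)
    also have "\<dots> \<le> 2 ^ (q + 1) * card (Good Z)"
      using \<open>card Z \<le> q\<close> by (intro mult_right_mono power_increasing) auto
    finally have "real (2 ^ h) \<le> real (2 ^ (q + 1) * card (Good Z))"
      by (simp only: of_nat_le_iff)
    then have "2 ^ h / 2 ^ (q + 1) \<le> real (card (Good Z))"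
      by (simp add: divide_le_eq mult.commute)
    moreover have "card (Good Z) \<le> card (Pow {..<h})"
      by (rule card_mono) (auto simp: Good_def)
    ultimately show ?thesis
      by (simp add: card_Pow of_nat_diff right_diff_distrib)
  qed
  have nonneg: "0 \<le> (1::real) - 1 / 2 ^ (q + 1)"
    using one_le_power[of "2::real" "q + 1"] by simp
  have "card ?Missing \<le> (\<Sum>Z\<in>Zs. (card (Pow {..<h}) - card (Good Z)) ^ card {..<N})"
    by (rule card_tuples_avoiding) (auto simp: Zs_def Good_def)
  then have "real (card ?Missing) \<le> real (\<Sum>Z\<in>Zs. (2 ^ h - card (Good Z)) ^ N)"
    by (simp only: of_nat_le_iff card_Pow card_lessThan finite_lessThan)
  also have "\<dots> = (\<Sum>Z\<in>Zs. real (2 ^ h - card (Good Z)) ^ N)"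
    by (simp only: of_nat_sum of_nat_power)
  also have "\<dots> \<le> (\<Sum>Z\<in>Zs. (2 ^ h * (1 - 1 / 2 ^ (q + 1))) ^ N)"
    by (intro sum_mono power_mono few_bad) auto
  also have "\<dots> = real (card Zs) * (2 ^ h * (1 - 1 / 2 ^ (q + 1))) ^ N"
    by simp
  also have "\<dots> \<le> 2 ^ h * (2 ^ h * (1 - 1 / 2 ^ (q + 1))) ^ N"
  proof (rule mult_right_mono)
    have "card Zs \<le> card (Pow {..<h})"
      unfolding Zs_def by (intro card_mono) auto
    then show "real (card Zs) \<le> 2 ^ h"
      by (simp add: card_Pow)
  qed (use nonneg in simp)
  also have "\<dots> = (2 ^ h) ^ N * (2 ^ h * (1 - 1 / 2 ^ (q + 1)) ^ (4 ^ q))"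
    unfolding assms(2) q_def[symmetric] by (simp only: power_mult_distrib mult.left_commute)
  also have "\<dots> \<le> (2 ^ h) ^ N * (1/2)"
    using missing_count_bound[OF q11 hq] by (intro mult_left_mono) auto
  finally have "real (card ?Missing) \<le> (2 ^ h) ^ N / 2"
    by (simp only: times_divide_eq_right mult_1_right)
  then show ?thesis
    unfolding Zs_def Good_def q_def .
qed

lemma binary_code_exists:
  assumes "704 \<le> h"
  obtains C where "C \<subseteq> Pow {..<h}" "C \<noteq> {}"
    "\<And>c c'. c \<in> C \<Longrightarrow> c' \<in> C \<Longrightarrow> c \<noteq> c' \<Longrightarrow> h < 4 * card (sym_diff c c')"
    "\<And>Z. Z \<subseteq> {..<h} \<Longrightarrow> card Z \<le> h div 64 \<Longrightarrow> \<exists>c\<in>C. c \<inter> Z = {} \<and> h \<le> 4 * card c"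
proof -
  define N :: nat where "N = 4 ^ (h div 64)"
  define F where "F = PiE {..<N} (\<lambda>_. Pow {..<h})"
  define Colliding where "Colliding = {f \<in> F.
      \<exists>a<N. \<exists>b<N. a \<noteq> b \<and> 4 * card (sym_diff (f a) (f b)) \<le> h}"
  define Missing where "Missing = {f \<in> F. \<exists>Z\<in>{Z \<in> Pow {..<h}. card Z \<le> h div 64}.
      \<forall>a\<in>{..<N}. f a \<notin> {c \<in> Pow {..<h}. c \<inter> Z = {} \<and> h \<le> 4 * card c}}"
  have "(4::nat) ^ 1 \<le> N"
    unfolding N_def using assms by (intro power_increasing) auto
  then have N2: "2 \<le> N"
    by simp
  have "real (card Colliding) \<le> (2 ^ h) ^ N / 4"
    unfolding Colliding_def F_def
    by (rule card_colliding_tuples) (use assms N2 in \<open>simp_all add: N_def\<close>)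
  moreover have "real (card Missing) \<le> (2 ^ h) ^ N / 2"
    unfolding Missing_def F_def by (rule card_tuples_missing_good_codeword[OF assms N_def])
  ultimately have "real (card (Colliding \<union> Missing)) \<le> (2 ^ h) ^ N / 4 + (2 ^ h) ^ N / 2"
    using card_Un_le[of Colliding Missing] by linarith
  also have "\<dots> < real (card F)"
    unfolding F_def by (simp add: card_PiE card_Pow)
  finally have "Colliding \<union> Missing \<noteq> F"
    by auto
  moreover have "Colliding \<union> Missing \<subseteq> F"
    unfolding Colliding_def Missing_def by auto
  ultimately obtain f where f: "f \<in> F" "f \<notin> Colliding" "f \<notin> Missing"
    by blast
  show ?thesis
  proof
    show "f ` {..<N} \<subseteq> Pow {..<h}"
      using f(1) unfolding F_def by auto
    show "f ` {..<N} \<noteq> {}"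
      using N2 by (simp add: lessThan_empty_iff)
    show "h < 4 * card (sym_diff c c')"
      if c: "c \<in> f ` {..<N}" "c' \<in> f ` {..<N}" and ne: "c \<noteq> c'" for c c'
    proof -
      obtain a b where ab: "a < N" "b < N" "c = f a" "c' = f b"
        using c by blast
      with ne have "\<not> 4 * card (sym_diff (f a) (f b)) \<le> h"
        using f(1,2) unfolding Colliding_def by blast
      with ab show ?thesis
        by simp
    qed
    show "\<exists>c\<in>f ` {..<N}. c \<inter> Z = {} \<and> h \<le> 4 * card c"
      if Z: "Z \<subseteq> {..<h}" "card Z \<le> h div 64" for Z
    proof -
      have "\<exists>a\<in>{..<N}. f a \<inter> Z = {} \<and> h \<le> 4 * card (f a)"
        using Z f(1,3) unfolding Missing_def by blast
      then show ?thesis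
        by blast
    qed
  qed
qed

definition dot :: "nat \<Rightarrow> (nat \<Rightarrow> real) \<Rightarrow> (nat \<Rightarrow> real) \<Rightarrow> real" where
  "dot k u v = (\<Sum>i<k. u i * v i)"

lemma dot_linear_right: "dot k p (\<lambda>i. a * u i + c * v i) = a * dot k p u + c * dot k p v"
  unfolding dot_def by (simp add: sum.distrib sum_distrib_left algebra_simps)

lemma dot_diff_right: "dot k p (\<lambda>i. u i - v i) = dot k p u - dot k p v"
  unfolding dot_def by (simp add: sum_subtractf algebra_simps)

lemma dot_cong_right: "(\<And>i. i < k \<Longrightarrow> u i = v i) \<Longrightarrow> dot k p u = dot k p v"
  unfolding dot_def by simp

lemma abs_dot_le_enorm:
  assumes "dot k p p \<le> 1"
  shows "\<bar>dot k p w\<bar> \<le> enorm k w"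
proof -
  have "(dot k p w)\<^sup>2 \<le> (\<Sum>i<k. (p i)\<^sup>2) * (\<Sum>i<k. (w i)\<^sup>2)"
    unfolding dot_def by (rule Cauchy_Schwarz_ineq_sum)
  also have "\<dots> \<le> 1 * (\<Sum>i<k. (w i)\<^sup>2)"
    using assms by (intro mult_right_mono) (auto simp: dot_def power2_eq_square intro: sum_nonneg)
  finally show ?thesis
    unfolding enorm_def by (simp add: real_le_rsqrt)
qed

definition max_loss :: "nat \<Rightarrow> (nat \<Rightarrow> real) set \<Rightarrow> real \<Rightarrow> (nat \<Rightarrow> real) \<Rightarrow> real" where
  "max_loss k P \<theta> u = max \<theta> (Max ((\<lambda>p. dot k p u) ` P)) - \<theta>"

lemma max_loss_nonneg: "0 \<le> max_loss k P \<theta> u"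
  unfolding max_loss_def by simp

lemma max_loss_eq_0_iff:
  assumes "finite P" "P \<noteq> {}"
  shows "max_loss k P \<theta> u = 0 \<longleftrightarrow> (\<forall>p\<in>P. dot k p u \<le> \<theta>)"
proof -
  have "max_loss k P \<theta> u = 0 \<longleftrightarrow> Max ((\<lambda>p. dot k p u) ` P) \<le> \<theta>"
    unfolding max_loss_def by (auto simp: max_def)
  also have "\<dots> \<longleftrightarrow> (\<forall>p\<in>P. dot k p u \<le> \<theta>)"
    using assms by simp
  finally show ?thesis .
qed

lemma max_loss_ge:
  assumes "finite P" "p \<in> P"
  shows "dot k p u - \<theta> \<le> max_loss k P \<theta> u"
  using assms unfolding max_loss_def by (simp add: le_max_iff_disj)

lemma max_loss_cong: "(\<And>i. i < k \<Longrightarrow> u i = v i) \<Longrightarrow> max_loss k P \<theta> u = max_loss k P \<theta> v"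
  unfolding max_loss_def using dot_cong_right[of k u v] by simp

lemma convex_max_loss:
  assumes "finite P" "P \<noteq> {}"
  shows "convex_loss k (max_loss k P \<theta>)"
  unfolding convex_loss_def
proof (intro ballI allI impI)
  fix u v :: "nat \<Rightarrow> real" and t :: real
  assume t: "0 \<le> t \<and> t \<le> 1"
  define A where "A = max \<theta> (Max ((\<lambda>p. dot k p u) ` P))"
  define B where "B = max \<theta> (Max ((\<lambda>p. dot k p v) ` P))"
  have "dot k p (\<lambda>i. t * u i + (1 - t) * v i) \<le> t * A + (1 - t) * B" if "p \<in> P" for p
  proof -
    have "dot k p u \<le> A" "dot k p v \<le> B"
      using assms(1) that unfolding A_def B_def by (auto simp: le_max_iff_disj)
    then have "t * dot k p u + (1 - t) * dot k p v \<le> t * A + (1 - t) * B"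
      using t by (intro add_mono mult_left_mono) auto
    then show ?thesis
      by (simp add: dot_linear_right)
  qed
  moreover have "\<theta> \<le> t * A + (1 - t) * B"
  proof -
    have "t * \<theta> + (1 - t) * \<theta> \<le> t * A + (1 - t) * B"
      using t unfolding A_def B_def by (intro add_mono mult_left_mono) auto
    then show ?thesis
      by (simp add: algebra_simps)
  qed
  ultimately have "max \<theta> (Max ((\<lambda>p. dot k p (\<lambda>i. t * u i + (1 - t) * v i)) ` P)) \<le> t * A + (1 - t) * B"
    using assms by simp
  then show "max_loss k P \<theta> (\<lambda>i. t * u i + (1 - t) * v i)
      \<le> t * max_loss k P \<theta> u + (1 - t) * max_loss k P \<theta> v"
    unfolding max_loss_def A_def[symmetric] B_def[symmetric] by (simp add: algebra_simps)
qed

lemma abs_Max_image_diff_le: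
  fixes f g :: "'a \<Rightarrow> real"
  assumes "finite P" "P \<noteq> {}" "\<And>p. p \<in> P \<Longrightarrow> \<bar>f p - g p\<bar> \<le> e"
  shows "\<bar>Max (f ` P) - Max (g ` P)\<bar> \<le> e"
proof -
  have "Max (f ` P) \<in> f ` P" "Max (g ` P) \<in> g ` P"
    using assms(1,2) by (intro Max_in; simp)+
  then obtain p1 p2 where p1: "p1 \<in> P" "Max (f ` P) = f p1" and p2: "p2 \<in> P" "Max (g ` P) = g p2"
    by blast
  have "g p1 \<le> Max (g ` P)" "f p2 \<le> Max (f ` P)"
    using assms(1) p1(1) p2(1) by auto
  with p1 p2 assms(3)[OF p1(1)] assms(3)[OF p2(1)] show ?thesis
    by linarith
qed

lemma lipschitz_max_loss:
  assumes "finite P" "P \<noteq> {}" "\<And>p. p \<in> P \<Longrightarrow> dot k p p \<le> 1"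
  shows "lipschitz1_loss k (max_loss k P \<theta>)"
  unfolding lipschitz1_loss_def
proof (intro ballI)
  fix u v :: "nat \<Rightarrow> real"
  have "\<bar>Max ((\<lambda>p. dot k p u) ` P) - Max ((\<lambda>p. dot k p v) ` P)\<bar> \<le> enorm k (\<lambda>i. u i - v i)"
    using assms abs_dot_le_enorm by (intro abs_Max_image_diff_le) (simp_all flip: dot_diff_right)
  then show "\<bar>max_loss k P \<theta> u - max_loss k P \<theta> v\<bar> \<le> enorm k (\<lambda>i. u i - v i)"
    unfolding max_loss_def by linarith
qed

locale blocking_code =
  fixes k h s :: nat and P :: "(nat \<Rightarrow> real) set" and b :: "nat \<Rightarrow> nat \<Rightarrow> real"
  assumes finite_P: "finite P" and P_nonempty: "P \<noteq> {}" and h_pos: "0 < h"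
    and dot_self: "\<And>p. p \<in> P \<Longrightarrow> dot k p p = 1"
    and dot_distinct: "\<And>p q. p \<in> P \<Longrightarrow> q \<in> P \<Longrightarrow> p \<noteq> q \<Longrightarrow> dot k p q \<le> 1/2"
    and dot_b: "\<And>p j. p \<in> P \<Longrightarrow> j < h \<Longrightarrow> dot k p (b j) = 0 \<or> dot k p (b j) \<le> -1"
    and blocking: "\<And>Z. Z \<subseteq> {..<h} \<Longrightarrow> card Z \<le> s \<Longrightarrow>
      \<exists>p\<in>P. (\<forall>j\<in>Z. dot k p (b j) \<le> -1) \<and> h \<le> 4 * card {j. j < h \<and> dot k p (b j) = 0}"

definition sign_vector :: "nat \<Rightarrow> nat set \<Rightarrow> nat \<Rightarrow> real" where
  "sign_vector h c = (\<lambda>i. if i = 0 then 1 / sqrt (real h + 1)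
     else if i \<le> h then (if i - 1 \<in> c then -1 else 1) / sqrt (real h + 1) else 0)"

definition probe_vector :: "nat \<Rightarrow> nat \<Rightarrow> nat \<Rightarrow> real" where
  "probe_vector h j = (\<lambda>i. if i = 0 \<or> i = j + 1 then - sqrt (real h + 1) else 0)"

lemma dot_sign_vectors:
  assumes "h + 1 \<le> k" "c \<subseteq> {..<h}" "c' \<subseteq> {..<h}"
  shows "dot k (sign_vector h c) (sign_vector h c') = (1 + real h - 2 * real (card (sym_diff c c'))) / (real h + 1)"
proof -
  define f where "f i = sign_vector h c i * sign_vector h c' i" for i
  define S where "S = sym_diff c c'"
  have r: "sqrt (real h + 1) * sqrt (real h + 1) = real h + 1"
    by simp
  have "dot k (sign_vector h c) (sign_vector h c') = (\<Sum>i<Suc h. f i)"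
    unfolding dot_def f_def
    by (rule sum.mono_neutral_right) (use assms(1) in \<open>auto simp: sign_vector_def\<close>)
  also have "\<dots> = f 0 + (\<Sum>j<h. f (Suc j))"
    by (rule sum.lessThan_Suc_shift)
  also have "(\<Sum>j<h. f (Suc j)) = (\<Sum>j<h. 1 - 2 * (if j \<in> S then 1 else 0)) / (real h + 1)"
    unfolding sum_divide_distrib
    by (intro sum.cong refl) (auto simp: f_def S_def sign_vector_def r divide_simps)
  also have "(\<Sum>j<h. 1 - 2 * (if j \<in> S then 1 else 0)) = real h - 2 * (\<Sum>j<h. if j \<in> S then 1 else 0)"
    by (simp add: sum_subtractf sum_distrib_left)
  also have "(\<Sum>j<h. if j \<in> S then 1 else 0) = (\<Sum>j\<in>{..<h} \<inter> S. (1::real))"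
    by (rule sum.inter_restrict[symmetric]) simp
  also have "{..<h} \<inter> S = S"
    unfolding S_def using assms(2,3) by blast
  also have "f 0 = 1 / (real h + 1)"
    unfolding f_def sign_vector_def using r by (simp add: divide_simps)
  finally show ?thesis
    unfolding S_def by (simp add: add_divide_distrib diff_divide_distrib)
qed

lemma dot_sign_probe:
  assumes "h + 1 \<le> k" "j < h"
  shows "dot k (sign_vector h c) (probe_vector h j) = (if j \<in> c then 0 else -2)"
proof -
  define r where "r = sqrt (real h + 1)"
  have r: "r * r = real h + 1" "0 < r"
    unfolding r_def by auto
  have "dot k (sign_vector h c) (probe_vector h j)
      = (\<Sum>i<k. (if i = 0 then - r * sign_vector h c i else 0)
          + (if i = j + 1 then - r * sign_vector h c i else 0))"
    unfolding dot_def probe_vector_def r_def by (intro sum.cong refl) auto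
  also have "\<dots> = - r * sign_vector h c 0 - r * sign_vector h c (j + 1)"
    using assms by (simp add: sum.distrib)
  also have "\<dots> = (if j \<in> c then 0 else -2)"
    using assms r unfolding sign_vector_def r_def[symmetric] by (auto simp: divide_simps)
  finally show ?thesis .
qed

lemma blocking_code_sign_vectors:
  assumes "h + 1 \<le> k" "0 < h" "C \<subseteq> Pow {..<h}" "C \<noteq> {}"
    and distance: "\<And>c c'. c \<in> C \<Longrightarrow> c' \<in> C \<Longrightarrow> c \<noteq> c' \<Longrightarrow> h < 4 * card (sym_diff c c')"
    and covering: "\<And>Z. Z \<subseteq> {..<h} \<Longrightarrow> card Z \<le> s \<Longrightarrow> \<exists>c\<in>C. c \<inter> Z = {} \<and> h \<le> 4 * card c"
  shows "blocking_code k h s (sign_vector h ` C) (probe_vector h)"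
proof
  have C_sub: "c \<subseteq> {..<h}" if "c \<in> C" for c
    using assms(3) that by auto
  show "finite (sign_vector h ` C)"
    using assms(3) finite_subset by (blast intro: finite_imageI)
  show "sign_vector h ` C \<noteq> {}" "0 < h"
    using assms(2,4) by auto
  show "dot k p p = 1" if "p \<in> sign_vector h ` C" for p
    using that dot_sign_vectors[OF assms(1) C_sub C_sub] by auto
  show "dot k p q \<le> 1/2"
    if pq: "p \<in> sign_vector h ` C" "q \<in> sign_vector h ` C" and ne: "p \<noteq> q" for p q
  proof -
    obtain c c' where cc: "c \<in> C" "c' \<in> C" "p = sign_vector h c" "q = sign_vector h c'"
      using pq by blast
    with ne have "real h + 1 \<le> 4 * real (card (sym_diff c c'))"
      using distance by fastforce
    then show ?thesis
      unfolding cc dot_sign_vectors[OF assms(1) C_sub[OF cc(1)] C_sub[OF cc(2)]] by (simp add: field_simps)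
  qed
  show "dot k p (probe_vector h j) = 0 \<or> dot k p (probe_vector h j) \<le> -1"
    if "p \<in> sign_vector h ` C" "j < h" for p j
    using that dot_sign_probe[OF assms(1)] by (auto split: if_splits)
  show "\<exists>p\<in>sign_vector h ` C. (\<forall>j\<in>Z. dot k p (probe_vector h j) \<le> -1)
      \<and> h \<le> 4 * card {j. j < h \<and> dot k p (probe_vector h j) = 0}"
    if Z: "Z \<subseteq> {..<h}" "card Z \<le> s" for Z
  proof -
    obtain c where c: "c \<in> C" "c \<inter> Z = {}" "h \<le> 4 * card c"
      using covering[OF Z] by blast
    have "{j. j < h \<and> dot k (sign_vector h c) (probe_vector h j) = 0} = c"
      using C_sub[OF c(1)] dot_sign_probe[OF assms(1)] by (auto split: if_splits)
    moreover have "\<forall>j\<in>Z. dot k (sign_vector h c) (probe_vector h j) \<le> -1"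
    proof
      fix j assume "j \<in> Z"
      then have "j < h" "j \<notin> c"
        using Z(1) c(2) by auto
      then show "dot k (sign_vector h c) (probe_vector h j) \<le> -1"
        using dot_sign_probe[OF assms(1)] by simp
    qed
    ultimately show ?thesis
      using c(1,3) by auto
  qed
qed

lemma blocking_code_trivial:
  assumes "0 < k"
  shows "blocking_code k 1 0 {\<lambda>i. if i = 0 then 1 else 0} (\<lambda>_ _. 0)"
proof
  show "dot k p p = 1" if "p \<in> {\<lambda>i. if i = 0 then 1 else 0}" for p
    using that assms by (simp add: dot_def if_distrib sum.delta cong: if_cong)
  show "\<exists>p\<in>{\<lambda>i. if i = 0 then 1 else 0}. (\<forall>j\<in>Z. dot k p ((\<lambda>_ _. 0) j) \<le> -1)
      \<and> 1 \<le> 4 * card {j::nat. j < 1 \<and> dot k p ((\<lambda>_ _. 0) j) = 0}"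
    if "Z \<subseteq> {..<1}" "card Z \<le> 0" for Z :: "nat set"
  proof -
    have "finite Z"
      using that(1) by (rule finite_subset) simp
    with that(2) show ?thesis
      by (simp add: dot_def card_Collect_less_nat)
  qed
qed (auto simp: dot_def)

definition sample_point :: "nat \<Rightarrow> nat \<Rightarrow> nat \<Rightarrow> nat \<Rightarrow> real" where
  "sample_point T t j = (\<lambda>c. if c = t \<or> c = T + j then 1 / sqrt 2 else 0)"

definition sample_points :: "nat \<Rightarrow> nat \<Rightarrow> (nat \<Rightarrow> real) set" where
  "sample_points T h = (\<lambda>(t, j). sample_point T t j) ` ({..<T} \<times> {..<h})"

definition seen_block :: "nat \<Rightarrow> nat \<Rightarrow> nat \<Rightarrow> (nat \<Rightarrow> nat \<Rightarrow> real) \<Rightarrow> nat \<Rightarrow> nat set" where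
  "seen_block T h n S t = {j. j < h \<and> sample_point T t j \<in> S ` {..<n}}"

definition code_matrix :: "nat \<Rightarrow> nat \<Rightarrow> nat \<Rightarrow> (nat \<Rightarrow> nat \<Rightarrow> real) \<Rightarrow> nat \<Rightarrow> nat \<Rightarrow> real" where
  "code_matrix k T h b = (\<lambda>i c. if i < k \<and> T \<le> c \<and> c < T + h then sqrt 2 * b (c - T) i else 0)"

definition perturb :: "nat \<Rightarrow> (nat \<Rightarrow> nat \<Rightarrow> real) \<Rightarrow> nat set \<Rightarrow> (nat \<Rightarrow> nat \<Rightarrow> real) \<Rightarrow> real
    \<Rightarrow> nat \<Rightarrow> nat \<Rightarrow> real" where
  "perturb k W G p \<beta> = (\<lambda>i c. W i c + (if i < k \<and> c \<in> G then \<beta> * p c i else 0))"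

lemma sample_point_vecs: "t < T \<Longrightarrow> T + j < m \<Longrightarrow> sample_point T t j \<in> vecs m"
  unfolding vecs_def sample_point_def by auto

lemma enorm_sample_point:
  assumes "t < T" "T + j < m"
  shows "enorm m (sample_point T t j) = 1"
proof -
  have "(\<Sum>c<m. (sample_point T t j c)\<^sup>2) = (\<Sum>c<m. (if c = t then 1/2 else 0) + (if c = T + j then 1/2 else 0))"
    using assms by (intro sum.cong refl) (auto simp: sample_point_def power_divide)
  also have "\<dots> = 1"
    using assms by (simp add: sum.distrib)
  finally show ?thesis
    unfolding enorm_def by simp
qed

lemma inj_on_sample_point: "inj_on (\<lambda>(t, j). sample_point T t j) ({..<T} \<times> A)"
proof (rule inj_onI, clarsimp)
  fix t j t' j' assume "t < T" "t' < T" "sample_point T t j = sample_point T t' j'"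
  then have "sample_point T t j t = sample_point T t' j' t" "sample_point T t j (T + j) = sample_point T t' j' (T + j)"
    by simp_all
  with \<open>t < T\<close> \<open>t' < T\<close> show "t = t' \<and> j = j'"
    unfolding sample_point_def by (auto split: if_splits)
qed

lemma mv_sample_point:
  assumes "t < T" "T + j < m" "i < k"
  shows "mv k m W (sample_point T t j) i = (W i t + W i (T + j)) / sqrt 2"
proof -
  have "(\<Sum>c<m. W i c * sample_point T t j c)
      = (\<Sum>c<m. (if c = t then W i c / sqrt 2 else 0) + (if c = T + j then W i c / sqrt 2 else 0))"
    using assms(1) by (intro sum.cong refl) (auto simp: sample_point_def)
  also have "\<dots> = W i t / sqrt 2 + W i (T + j) / sqrt 2"
    using assms by (simp add: sum.distrib)
  finally show ?thesis
    unfolding mv_def using assms(3) by (simp add: add_divide_distrib)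
qed

lemma pop_risk_uniform_sample_points:
  "pop_risk k m l (uniform_count_measure (sample_points T h)) W
    = (\<Sum>t<T. \<Sum>j<h. l (mv k m W (sample_point T t j))) / real (T * h)"
proof -
  have "pop_risk k m l (uniform_count_measure (sample_points T h)) W
      = (\<Sum>x\<in>sample_points T h. l (mv k m W x)) / real (card (sample_points T h))"
    unfolding pop_risk_def sample_points_def by (rule integral_uniform_count_measure) simp
  also have "(\<Sum>x\<in>sample_points T h. l (mv k m W x))
      = (\<Sum>(t, j)\<in>{..<T} \<times> {..<h}. l (mv k m W (sample_point T t j)))"
    unfolding sample_points_def by (rule sum.reindex_cong[OF inj_on_sample_point]) auto
  also have "\<dots> = (\<Sum>t<T. \<Sum>j<h. l (mv k m W (sample_point T t j)))"
    by (rule sum.cartesian_product[symmetric])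
  also have "card (sample_points T h) = T * h"
    unfolding sample_points_def by (simp add: card_image[OF inj_on_sample_point] card_cartesian_product)
  finally show ?thesis .
qed

lemma mv_code_matrix:
  assumes "t < T" "j < h" "T + h \<le> m" "i < k"
  shows "mv k m (code_matrix k T h b) (sample_point T t j) i = b j i"
  using assms by (simp add: mv_sample_point code_matrix_def)

lemma code_matrix_mats: "T + h \<le> m \<Longrightarrow> code_matrix k T h b \<in> mats k m"
  unfolding mats_def code_matrix_def by auto

lemma perturb_mats: "W \<in> mats k m \<Longrightarrow> G \<subseteq> {..<m} \<Longrightarrow> perturb k W G p \<beta> \<in> mats k m"
  unfolding mats_def perturb_def by auto

lemma frob_dist_perturb:
  assumes "finite G" "G \<subseteq> {..<m}" "\<And>c. c \<in> G \<Longrightarrow> dot k (p c) (p c) = 1"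
  shows "frob_dist k m (perturb k W G p \<beta>) W = \<bar>\<beta>\<bar> * sqrt (real (card G))"
proof -
  have "(\<Sum>i<k. \<Sum>c<m. (perturb k W G p \<beta> i c - W i c)\<^sup>2) = (\<Sum>i<k. \<Sum>c\<in>G. \<beta>\<^sup>2 * (p c i)\<^sup>2)"
  proof (rule sum.cong[OF refl])
    fix i assume "i \<in> {..<k}"
    then have "(\<Sum>c<m. (perturb k W G p \<beta> i c - W i c)\<^sup>2)
        = (\<Sum>c<m. if c \<in> G then \<beta>\<^sup>2 * (p c i)\<^sup>2 else 0)"
      by (intro sum.cong refl) (simp add: perturb_def power_mult_distrib)
    also have "\<dots> = (\<Sum>c\<in>{..<m} \<inter> G. \<beta>\<^sup>2 * (p c i)\<^sup>2)"
      by (simp add: sum.inter_restrict)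
    also have "{..<m} \<inter> G = G"
      using assms(2) by blast
    finally show "(\<Sum>c<m. (perturb k W G p \<beta> i c - W i c)\<^sup>2) = (\<Sum>c\<in>G. \<beta>\<^sup>2 * (p c i)\<^sup>2)" .
  qed
  also have "\<dots> = (\<Sum>c\<in>G. \<beta>\<^sup>2 * dot k (p c) (p c))"
    by (subst sum.swap) (simp add: dot_def sum_distrib_left power2_eq_square)
  also have "\<dots> = \<beta>\<^sup>2 * real (card G)"
    using assms(3) by simp
  finally show ?thesis
    unfolding frob_dist_def by (simp add: real_sqrt_mult)
qed

lemma mv_perturb_code_matrix:
  assumes "G \<subseteq> {..<T}" "t < T" "j < h" "T + h \<le> m" "i < k"
  shows "mv k m (perturb k (code_matrix k T h b) G p \<beta>) (sample_point T t j) i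
    = b j i + (if t \<in> G then \<beta> / sqrt 2 else 0) * p t i"
proof -
  have "T + j \<notin> G"
    using assms(1) by auto
  then show ?thesis
    using assms by (simp add: mv_sample_point perturb_def code_matrix_def add_divide_distrib)
qed

lemma card_heavy_le_sum:
  fixes f :: "'a \<Rightarrow> nat"
  assumes "finite A"
  shows "card {t \<in> A. s < f t} * (s + 1) \<le> sum f A"
proof -
  have "card {t \<in> A. s < f t} * (s + 1) = (\<Sum>t\<in>{t \<in> A. s < f t}. s + 1)"
    by simp
  also have "\<dots> \<le> (\<Sum>t\<in>{t \<in> A. s < f t}. f t)"
    by (rule sum_mono) simp
  also have "\<dots> \<le> sum f A"
    using assms by (intro sum_mono2) auto
  finally show ?thesis .
qed

lemma sum_card_seen_block: "(\<Sum>t<T. card (seen_block T h n S t)) \<le> n"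
proof -
  have "(\<Sum>t<T. card (seen_block T h n S t)) = card (SIGMA t:{..<T}. seen_block T h n S t)"
    by (rule card_SigmaI[symmetric]) (auto simp: seen_block_def)
  also have "\<dots> = card ((\<lambda>(t, j). sample_point T t j) ` (SIGMA t:{..<T}. seen_block T h n S t))"
    by (rule card_image[symmetric], rule inj_on_subset[OF inj_on_sample_point[of T UNIV]]) auto
  also have "\<dots> \<le> card (S ` {..<n})"
    by (rule card_mono) (auto simp: seen_block_def)
  also have "\<dots> \<le> n"
    using card_image_le[of "{..<n}" S] by simp
  finally show ?thesis .
qed

lemma card_heavy_blocks:
  "card {t \<in> {..<T}. s < card (seen_block T h n S t)} \<le> n div (s + 1)"
  using card_heavy_le_sum[of "{..<T}" s "\<lambda>t. card (seen_block T h n S t)"] sum_card_seen_block[of T h n S]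
  by (simp add: less_eq_div_iff_mult_less_eq)

context blocking_code
begin

lemma max_loss_code_vector: "0 \<le> \<theta> \<Longrightarrow> j < h \<Longrightarrow> max_loss k P \<theta> (b j) = 0"
  using dot_b by (force simp: max_loss_eq_0_iff[OF finite_P P_nonempty])

lemma max_loss_seen_point:
  assumes "p \<in> P" "j < h" "dot k p (b j) \<le> -1" "0 \<le> \<gamma>" "\<gamma> \<le> 1" "\<gamma> \<le> 2 * \<theta>"
  shows "max_loss k P \<theta> (\<lambda>i. b j i + \<gamma> * p i) = 0"
  unfolding max_loss_eq_0_iff[OF finite_P P_nonempty]
proof
  fix q assume "q \<in> P"
  have split: "dot k q (\<lambda>i. b j i + \<gamma> * p i) = dot k q (b j) + \<gamma> * dot k q p"
    using dot_linear_right[of k q 1 "b j" \<gamma> p] by simp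
  show "dot k q (\<lambda>i. b j i + \<gamma> * p i) \<le> \<theta>"
  proof (cases "q = p")
    case True
    then show ?thesis
      using split assms dot_self by simp
  next
    case False
    then have "\<gamma> * dot k q p \<le> \<gamma> * (1/2)"
      using assms(1,4) \<open>q \<in> P\<close> dot_distinct by (intro mult_left_mono) auto
    moreover have "dot k q (b j) \<le> 0"
      using dot_b[OF \<open>q \<in> P\<close> assms(2)] by auto
    ultimately show ?thesis
      using split assms(6) by simp
  qed
qed

lemma max_loss_unseen_point:
  assumes "p \<in> P" "dot k p (b j) = 0"
  shows "\<gamma> - \<theta> \<le> max_loss k P \<theta> (\<lambda>i. b j i + \<gamma> * p i)"
proof -
  have "dot k p (\<lambda>i. b j i + \<gamma> * p i) - \<theta> \<le> max_loss k P \<theta> (\<lambda>i. b j i + \<gamma> * p i)"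
    by (rule max_loss_ge[OF finite_P assms(1)])
  then show ?thesis
    using dot_linear_right[of k p 1 "b j" \<gamma> p] assms dot_self by simp
qed

lemma max_loss_perturbed_point:
  assumes "G \<subseteq> {..<T}" "t < T" "j < h" "T + h \<le> m"
  shows "max_loss k P \<theta> (mv k m (perturb k (code_matrix k T h b) G p (sqrt 2 * \<gamma>)) (sample_point T t j))
    = max_loss k P \<theta> (\<lambda>i. b j i + (if t \<in> G then \<gamma> else 0) * p t i)"
  by (rule max_loss_cong) (simp add: mv_perturb_code_matrix assms)

lemma emp_risk_perturbed_eq_0:
  assumes "G \<subseteq> {..<T}" "T + h \<le> m" "S ` {..<n} \<subseteq> sample_points T h"
    and blocked: "\<And>t. t \<in> G \<Longrightarrow> p t \<in> P \<and> (\<forall>j\<in>seen_block T h n S t. dot k (p t) (b j) \<le> -1)"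
    and "0 \<le> \<gamma>" "\<gamma> \<le> 1"
  shows "emp_risk k m (max_loss k P (\<gamma>/2)) n S (perturb k (code_matrix k T h b) G p (sqrt 2 * \<gamma>)) = 0"
proof -
  have "max_loss k P (\<gamma>/2) (mv k m (perturb k (code_matrix k T h b) G p (sqrt 2 * \<gamma>)) (S i)) = 0"
    if "i < n" for i
  proof -
    obtain t j where tj: "t < T" "j < h" "S i = sample_point T t j"
      using assms(3) \<open>i < n\<close> unfolding sample_points_def by fastforce
    then have seen: "j \<in> seen_block T h n S t"
      using \<open>i < n\<close> unfolding seen_block_def by (metis (mono_tags, lifting) image_eqI lessThan_iff mem_Collect_eq)
    show ?thesis
    proof (cases "t \<in> G")
      case True
      then show ?thesis
        using tj seen blocked[OF True] assms by (simp add: max_loss_perturbed_point max_loss_seen_point)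
    next
      case False
      then show ?thesis
        using tj assms by (simp add: max_loss_perturbed_point max_loss_code_vector)
    qed
  qed
  then show ?thesis
    unfolding emp_risk_def by simp
qed

lemma pop_risk_perturbed_ge:
  assumes "G \<subseteq> {..<T}" "T + h \<le> m" "0 < T" "T \<le> 2 * card G"
    and good: "\<And>t. t \<in> G \<Longrightarrow> p t \<in> P \<and> h \<le> 4 * card {j. j < h \<and> dot k (p t) (b j) = 0}"
    and "0 \<le> \<gamma>"
  shows "\<gamma> / 16 \<le> pop_risk k m (max_loss k P (\<gamma>/2)) (uniform_count_measure (sample_points T h))
    (perturb k (code_matrix k T h b) G p (sqrt 2 * \<gamma>))"
proof -
  define F where "F t j = max_loss k P (\<gamma>/2)
    (mv k m (perturb k (code_matrix k T h b) G p (sqrt 2 * \<gamma>)) (sample_point T t j))" for t j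
  define Hit where "Hit t = {j. j < h \<and> dot k (p t) (b j) = 0}" for t
  have F_nonneg: "0 \<le> F t j" for t j
    unfolding F_def by (rule max_loss_nonneg)
  have "real T \<le> real (2 * card G)"
    using assms(4) by (simp only: of_nat_le_iff)
  then have "real T * (real h * \<gamma>) / 16 \<le> 2 * real (card G) * (real h * \<gamma>) / 16"
    using assms(6) by (intro divide_right_mono mult_right_mono) auto
  then have "real T * real h * \<gamma> / 16 \<le> real (card G) * (real h / 4) * (\<gamma> / 2)"
    by (simp add: field_simps)
  also have "\<dots> = (\<Sum>t\<in>G. (real h / 4) * (\<gamma> / 2))"
    by simp
  also have "\<dots> \<le> (\<Sum>t\<in>G. \<Sum>j\<in>Hit t. \<gamma> / 2)"
  proof (rule sum_mono)
    fix t assume "t \<in> G"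
    then have "real h / 4 \<le> real (card (Hit t))"
      using good unfolding Hit_def by fastforce
    then have "real h / 4 * (\<gamma> / 2) \<le> real (card (Hit t)) * (\<gamma> / 2)"
      by (rule mult_right_mono) (use assms(6) in simp)
    then show "real h / 4 * (\<gamma> / 2) \<le> (\<Sum>j\<in>Hit t. \<gamma> / 2)"
      by simp
  qed
  also have "\<dots> \<le> (\<Sum>t\<in>G. \<Sum>j\<in>Hit t. F t j)"
  proof (intro sum_mono)
    fix t j assume "t \<in> G" "j \<in> Hit t"
    then have "t < T" "j < h" "dot k (p t) (b j) = 0"
      using assms(1) unfolding Hit_def by auto
    then show "\<gamma> / 2 \<le> F t j"
      using \<open>t \<in> G\<close> good max_loss_unseen_point[of "p t" j \<gamma> "\<gamma>/2"]
      unfolding F_def max_loss_perturbed_point[OF assms(1) \<open>t < T\<close> \<open>j < h\<close> assms(2)] by simp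
  qed
  also have "\<dots> \<le> (\<Sum>t\<in>G. \<Sum>j<h. F t j)"
    by (intro sum_mono sum_mono2) (auto simp: Hit_def F_nonneg)
  also have "\<dots> \<le> (\<Sum>t<T. \<Sum>j<h. F t j)"
    using assms(1) by (intro sum_mono2) (auto intro: sum_nonneg F_nonneg)
  finally have "real T * real h * \<gamma> / 16 \<le> (\<Sum>t<T. \<Sum>j<h. F t j)" .
  moreover have "0 < real T * real h"
    using assms(3) h_pos by simp
  ultimately show ?thesis
    unfolding pop_risk_uniform_sample_points F_def[symmetric] by (simp add: field_simps)
qed

end

definition lower_bound_instance :: "nat \<Rightarrow> nat \<Rightarrow> nat \<Rightarrow> real \<Rightarrow> real \<Rightarrow> bool" where
  "lower_bound_instance k n m p0 e \<longleftrightarrow> (\<exists>W0 l D.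
    W0 \<in> mats k m \<and>
    convex_loss k l \<and> lipschitz1_loss k l \<and>
    prob_space D \<and>
    (\<forall>x\<in>space D. x \<in> vecs m \<and> enorm m x \<le> 1) \<and>
    (\<forall>W\<in>hyp_ball k m W0. integrable D (\<lambda>x. l (mv k m W x))) \<and>
    (\<exists>E \<in> sets (PiM {..<n} (\<lambda>_. D)).
       measure (PiM {..<n} (\<lambda>_. D)) E \<ge> p0 \<and>
       (\<forall>S\<in>E.
          \<exists>What \<in> hyp_ball k m W0.
            (\<forall>W\<in>hyp_ball k m W0. emp_risk k m l n S What \<le> emp_risk k m l n S W) \<and>
            (\<exists>Wstar \<in> hyp_ball k m W0.
               (\<forall>W\<in>hyp_ball k m W0. pop_risk k m l D Wstar \<le> pop_risk k m l D W) \<and>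
               pop_risk k m l D What - pop_risk k m l D Wstar \<ge> e))))"

lemma sqrt_ratio_le_inverse_sqrt_blocks:
  assumes "s + 1 \<le> n"
  shows "sqrt (real (s + 1) / real n) / 3 \<le> 1 / sqrt (2 * real (2 * (n div (s + 1)) + 2))"
proof -
  define q where "q = n div (s + 1)"
  define x where "x = real (s + 1) / real n"
  have q1: "1 \<le> q"
    using assms unfolding q_def by (simp add: less_eq_div_iff_mult_less_eq)
  have "real q \<le> real n / real (s + 1)"
    unfolding q_def by (rule of_nat_div_le_of_nat)
  then have "x * real q \<le> 1"
    using assms unfolding x_def by (simp add: field_simps)
  then have "x * (2 * real (2 * q + 2)) \<le> 3\<^sup>2"
    using q1 assms unfolding x_def by (simp add: field_simps)
  then have "sqrt (x * (2 * real (2 * q + 2))) \<le> sqrt (3\<^sup>2)"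
    by (rule real_sqrt_le_mono)
  then have "sqrt x * sqrt (2 * real (2 * q + 2)) \<le> 3"
    by (simp add: real_sqrt_mult)
  then show ?thesis
    unfolding x_def[symmetric] q_def[symmetric] by (simp add: field_simps)
qed

context blocking_code
begin

lemma erm_with_large_risk:
  assumes "T + h \<le> m" "0 < T" "S ` {..<n} \<subseteq> sample_points T h"
    and "T \<le> 2 * card {t \<in> {..<T}. card (seen_block T h n S t) \<le> s}"
    and \<gamma>: "\<gamma> = 1 / sqrt (2 * real T)"
  shows "\<exists>W\<in>hyp_ball k m (code_matrix k T h b).
    emp_risk k m (max_loss k P (\<gamma>/2)) n S W = 0 \<and>
    \<gamma> / 16 \<le> pop_risk k m (max_loss k P (\<gamma>/2)) (uniform_count_measure (sample_points T h)) W"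
proof -
  define G where "G = {t \<in> {..<T}. card (seen_block T h n S t) \<le> s}"
  have choice: "\<forall>t\<in>G. \<exists>q. q \<in> P \<and> (\<forall>j\<in>seen_block T h n S t. dot k q (b j) \<le> -1)
      \<and> h \<le> 4 * card {j. j < h \<and> dot k q (b j) = 0}"
  proof
    fix t assume "t \<in> G"
    then have seen: "seen_block T h n S t \<subseteq> {..<h}" "card (seen_block T h n S t) \<le> s"
      unfolding G_def seen_block_def by auto
    show "\<exists>q. q \<in> P \<and> (\<forall>j\<in>seen_block T h n S t. dot k q (b j) \<le> -1)
        \<and> h \<le> 4 * card {j. j < h \<and> dot k q (b j) = 0}"
      using blocking[OF seen] by blast
  qed
  obtain p where p: "\<forall>t\<in>G. p t \<in> P \<and> (\<forall>j\<in>seen_block T h n S t. dot k (p t) (b j) \<le> -1)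
      \<and> h \<le> 4 * card {j. j < h \<and> dot k (p t) (b j) = 0}"
    using bchoice[OF choice] by blast
  have G_sub: "G \<subseteq> {..<T}"
    unfolding G_def by auto
  have \<gamma>_nonneg: "0 \<le> \<gamma>" and \<gamma>_le_1: "\<gamma> \<le> 1"
    using assms(2) unfolding \<gamma> by auto
  have "sqrt 2 * \<gamma> * sqrt (real (card G)) = sqrt (real (card G)) / sqrt (real T)"
    unfolding \<gamma> by (simp add: real_sqrt_mult)
  also have "\<dots> \<le> 1"
    using card_mono[OF _ G_sub] assms(2) by simp
  finally have "sqrt 2 * \<gamma> * sqrt (real (card G)) \<le> 1" .
  moreover have "frob_dist k m (perturb k (code_matrix k T h b) G p (sqrt 2 * \<gamma>)) (code_matrix k T h b)
      = sqrt 2 * \<gamma> * sqrt (real (card G))"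
    using G_sub assms(1) \<gamma>_nonneg dot_self p
    by (subst frob_dist_perturb) (auto intro: finite_subset[OF G_sub])
  ultimately have "perturb k (code_matrix k T h b) G p (sqrt 2 * \<gamma>) \<in> hyp_ball k m (code_matrix k T h b)"
    using G_sub assms(1) unfolding hyp_ball_def
    by (simp add: perturb_mats code_matrix_mats order.trans[OF G_sub])
  moreover have "emp_risk k m (max_loss k P (\<gamma>/2)) n S (perturb k (code_matrix k T h b) G p (sqrt 2 * \<gamma>)) = 0"
    using G_sub assms(1,3) p \<gamma>_nonneg \<gamma>_le_1 by (intro emp_risk_perturbed_eq_0) auto
  moreover have "\<gamma> / 16 \<le> pop_risk k m (max_loss k P (\<gamma>/2)) (uniform_count_measure (sample_points T h))
      (perturb k (code_matrix k T h b) G p (sqrt 2 * \<gamma>))"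
    using G_sub assms p \<gamma>_nonneg unfolding G_def by (intro pop_risk_perturbed_ge) auto
  ultimately show ?thesis
    by blast
qed

lemma pop_risk_code_matrix:
  assumes "T + h \<le> m" "0 \<le> \<theta>"
  shows "pop_risk k m (max_loss k P \<theta>) (uniform_count_measure (sample_points T h)) (code_matrix k T h b) = 0"
proof -
  have "max_loss k P \<theta> (mv k m (code_matrix k T h b) (sample_point T t j)) = 0" if "t < T" "j < h" for t j
  proof -
    have "max_loss k P \<theta> (mv k m (code_matrix k T h b) (sample_point T t j)) = max_loss k P \<theta> (b j)"
      using that assms(1) by (intro max_loss_cong) (simp add: mv_code_matrix)
    also have "\<dots> = 0"
      using that(2) assms(2) by (rule max_loss_code_vector[rotated])
    finally show ?thesis .
  qed
  then show ?thesis
    unfolding pop_risk_uniform_sample_points by simp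
qed

lemma hard_instance:
  assumes "s + 1 \<le> n" "h \<le> n" "e \<le> sqrt (real (s + 1) / real n) / 48"
  shows "lower_bound_instance k n (5 * n) 1 e"
proof -
  define q where "q = n div (s + 1)"
  define T where "T = 2 * q + 2"
  define \<gamma> where "\<gamma> = 1 / sqrt (2 * real T)"
  define A where "A = sample_points T h"
  define D where "D = uniform_count_measure A"
  define l where "l = max_loss k P (\<gamma>/2)"
  define W0 where "W0 = code_matrix k T h b"
  have "q \<le> n" "1 \<le> n"
    using assms(1) unfolding q_def by (auto intro: div_le_dividend)
  then have Tm: "T + h \<le> 5 * n"
    using assms(2) unfolding T_def by linarith
  have T_pos: "0 < T"
    unfolding T_def by simp
  have \<gamma>_nonneg: "0 \<le> \<gamma>"
    unfolding \<gamma>_def by simp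
  have finA: "finite A" and A_nonempty: "A \<noteq> {}"
    using T_pos h_pos unfolding A_def sample_points_def by auto
  have space_D: "space D = A"
    unfolding D_def by (rule space_uniform_count_measure)
  have D_prob: "prob_space D"
    unfolding D_def using finA A_nonempty by (rule prob_space_uniform_count_measure)
  have W0_ball: "W0 \<in> hyp_ball k (5 * n) W0"
    unfolding hyp_ball_def frob_dist_def W0_def using code_matrix_mats[OF Tm] by simp
  have pop_W0: "pop_risk k (5 * n) l D W0 = 0"
    unfolding l_def D_def A_def W0_def using Tm \<gamma>_nonneg by (simp add: pop_risk_code_matrix)
  have pop_nonneg: "0 \<le> pop_risk k (5 * n) l D W" for W
    unfolding l_def D_def A_def pop_risk_uniform_sample_points
    by (intro divide_nonneg_nonneg sum_nonneg max_loss_nonneg) simp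
  have emp_nonneg: "0 \<le> emp_risk k (5 * n) l n S W" for S W
    unfolding l_def emp_risk_def by (intro divide_nonneg_nonneg sum_nonneg max_loss_nonneg) simp
  have e_le: "e \<le> \<gamma> / 16"
    using assms(3) sqrt_ratio_le_inverse_sqrt_blocks[OF assms(1)] unfolding \<gamma>_def T_def q_def by simp
  have bad_erm: "\<exists>What\<in>hyp_ball k (5 * n) W0. emp_risk k (5 * n) l n S What = 0 \<and> \<gamma> / 16 \<le> pop_risk k (5 * n) l D What"
    if "S \<in> space (PiM {..<n} (\<lambda>_. D))" for S
  proof -
    have S: "S ` {..<n} \<subseteq> A"
      using that unfolding space_PiM space_D by auto
    let ?G = "{t \<in> {..<T}. card (seen_block T h n S t) \<le> s}"
    let ?B = "{t \<in> {..<T}. s < card (seen_block T h n S t)}"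
    have "card ?B \<le> q"
      unfolding q_def by (rule card_heavy_blocks)
    moreover have "?G \<union> ?B = {..<T}"
      by auto
    then have "card (?G \<union> ?B) = T"
      by (metis card_lessThan)
    then have "card ?G + card ?B = T"
      by (subst (asm) card_Un_disjoint) auto
    moreover have "T \<le> 2 * a" if "a + c = T" "c \<le> q" for a c
      using that unfolding T_def by linarith
    ultimately have "T \<le> 2 * card ?G"
      by blast
    then show ?thesis
      using erm_with_large_risk[OF Tm T_pos S[unfolded A_def] _ \<gamma>_def]
      unfolding W0_def l_def D_def A_def by blast
  qed
  show ?thesis
    unfolding lower_bound_instance_def
  proof (intro exI[of _ W0] exI[of _ l] exI[of _ D] conjI)
    show "W0 \<in> mats k (5 * n)"
      unfolding W0_def using Tm by (rule code_matrix_mats)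
    show "convex_loss k l"
      unfolding l_def using finite_P P_nonempty by (rule convex_max_loss)
    show "lipschitz1_loss k l"
      unfolding l_def using finite_P P_nonempty dot_self by (intro lipschitz_max_loss) auto
    show "prob_space D"
      by (rule D_prob)
    show "\<forall>x\<in>space D. x \<in> vecs (5 * n) \<and> enorm (5 * n) x \<le> 1"
      using Tm unfolding space_D A_def sample_points_def
      by (auto simp: sample_point_vecs enorm_sample_point)
    show "\<forall>W\<in>hyp_ball k (5 * n) W0. integrable D (\<lambda>x. l (mv k (5 * n) W x))"
      unfolding D_def uniform_count_measure_def using finA by (simp add: integrable_point_measure_finite)
    show "\<exists>E\<in>sets (PiM {..<n} (\<lambda>_. D)). 1 \<le> measure (PiM {..<n} (\<lambda>_. D)) E \<and>
      (\<forall>S\<in>E. \<exists>What\<in>hyp_ball k (5 * n) W0.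
         (\<forall>W\<in>hyp_ball k (5 * n) W0. emp_risk k (5 * n) l n S What \<le> emp_risk k (5 * n) l n S W) \<and>
         (\<exists>Wstar\<in>hyp_ball k (5 * n) W0.
            (\<forall>W\<in>hyp_ball k (5 * n) W0. pop_risk k (5 * n) l D Wstar \<le> pop_risk k (5 * n) l D W) \<and>
            e \<le> pop_risk k (5 * n) l D What - pop_risk k (5 * n) l D Wstar))"
    proof (intro bexI[of _ "space (PiM {..<n} (\<lambda>_. D))"] conjI ballI)
      have "prob_space (PiM {..<n} (\<lambda>_. D))"
        using D_prob by (intro prob_space_PiM)
      then show "1 \<le> measure (PiM {..<n} (\<lambda>_. D)) (space (PiM {..<n} (\<lambda>_. D)))"
        by (simp add: prob_space.prob_space)
      fix S assume "S \<in> space (PiM {..<n} (\<lambda>_. D))"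
      with bad_erm obtain What where What: "What \<in> hyp_ball k (5 * n) W0"
        "emp_risk k (5 * n) l n S What = 0" "\<gamma> / 16 \<le> pop_risk k (5 * n) l D What"
        by blast
      have "\<forall>W\<in>hyp_ball k (5 * n) W0. emp_risk k (5 * n) l n S What \<le> emp_risk k (5 * n) l n S W"
        using What(2) emp_nonneg by simp
      moreover have "\<forall>W\<in>hyp_ball k (5 * n) W0. pop_risk k (5 * n) l D W0 \<le> pop_risk k (5 * n) l D W"
        using pop_W0 pop_nonneg by simp
      moreover have "e \<le> pop_risk k (5 * n) l D What - pop_risk k (5 * n) l D W0"
        using What(3) pop_W0 e_le by simp
      ultimately show "\<exists>What\<in>hyp_ball k (5 * n) W0.
         (\<forall>W\<in>hyp_ball k (5 * n) W0. emp_risk k (5 * n) l n S What \<le> emp_risk k (5 * n) l n S W) \<and>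
         (\<exists>Wstar\<in>hyp_ball k (5 * n) W0.
            (\<forall>W\<in>hyp_ball k (5 * n) W0. pop_risk k (5 * n) l D Wstar \<le> pop_risk k (5 * n) l D W) \<and>
            e \<le> pop_risk k (5 * n) l D What - pop_risk k (5 * n) l D Wstar)"
        using What(1) W0_ball by blast
    qed simp
  qed
qed

end

theorem theorem1:
  shows "\<exists>(c::real) (a::real) (p0::real) (c1::real) (c2::real).
    c > 0 \<and> a \<ge> 0 \<and> p0 > 0 \<and> c1 > 0 \<and> c2 > 0 \<and>
    (\<forall>k n :: nat. 1 \<le> k \<longrightarrow> k \<le> n \<longrightarrow>
      (\<exists>m::nat. c1 * real n \<le> real m \<and> real m \<le> c2 * real n \<and>
       (\<exists>W0 l D.
          W0 \<in> mats k m \<and>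
          convex_loss k l \<and> lipschitz1_loss k l \<and>
          prob_space D \<and>
          (\<forall>x\<in>space D. x \<in> vecs m \<and> enorm m x \<le> 1) \<and>
          (\<forall>W\<in>hyp_ball k m W0. integrable D (\<lambda>x. l (mv k m W x))) \<and>
          (\<exists>E \<in> sets (PiM {..<n} (\<lambda>_. D)).
             measure (PiM {..<n} (\<lambda>_. D)) E \<ge> p0 \<and>
             (\<forall>S\<in>E.
                \<exists>What \<in> hyp_ball k m W0.
                  (\<forall>W\<in>hyp_ball k m W0. emp_risk k m l n S What \<le> emp_risk k m l n S W) \<and>
                  (\<exists>Wstar \<in> hyp_ball k m W0.
                     (\<forall>W\<in>hyp_ball k m W0. pop_risk k m l D Wstar \<le> pop_risk k m l D W) \<and>
                     pop_risk k m l D What - pop_risk k m l D Wstar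
                       \<ge> c * sqrt (real k / real n) / (1 + ln (real n)) powr a))))))"
proof -
  define c :: real where "c = 1 / (48 * sqrt 704)"
  have instances: "\<forall>k n. 1 \<le> k \<longrightarrow> k \<le> n \<longrightarrow> (\<exists>m. 5 * real n \<le> real m \<and> real m \<le> 5 * real n \<and>
    lower_bound_instance k n m 1 (c * sqrt (real k / real n) / (1 + ln (real n)) powr 0))"
  proof (intro allI impI)
    fix k n :: nat
    assume k: "1 \<le> k" "k \<le> n"
    define e where "e = c * sqrt (real k / real n) / (1 + ln (real n)) powr 0"
    have e_le: "e \<le> sqrt (real (s + 1) / real n) / 48" if "real k \<le> 704 * real (s + 1)" for s
    proof -
      have "0 < 1 + ln (real n)"
        using k by (simp add: add_pos_nonneg)
      then have "e = sqrt (real k / (704 * real n)) / 48"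
        unfolding e_def c_def by (simp add: real_sqrt_divide real_sqrt_mult)
      also have "\<dots> \<le> sqrt (real (s + 1) / real n) / 48"
        using that k by (simp add: divide_simps)
      finally show ?thesis .
    qed
    have "lower_bound_instance k n (5 * n) 1 e"
    proof (cases "705 \<le> k")
      case True
      then have "704 \<le> k - 1"
        by simp
      then obtain C where "C \<subseteq> Pow {..<k - 1}" "C \<noteq> {}"
        "\<And>c c'. c \<in> C \<Longrightarrow> c' \<in> C \<Longrightarrow> c \<noteq> c' \<Longrightarrow> k - 1 < 4 * card (sym_diff c c')"
        "\<And>Z. Z \<subseteq> {..<k - 1} \<Longrightarrow> card Z \<le> (k - 1) div 64 \<Longrightarrow> \<exists>c\<in>C. c \<inter> Z = {} \<and> k - 1 \<le> 4 * card c"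
        by (rule binary_code_exists) blast
      then have code: "blocking_code k (k - 1) ((k - 1) div 64) (sign_vector (k - 1) ` C) (probe_vector (k - 1))"
        using True by (intro blocking_code_sign_vectors) auto
      have "(k - 1) div 64 * 64 + (k - 1) mod 64 = k - 1" "(k - 1) mod 64 < 64"
        by simp_all
      then have "k \<le> 704 * ((k - 1) div 64) + 704"
        by linarith
      then have "real k \<le> 704 * real ((k - 1) div 64 + 1)"
        by (simp add: algebra_simps flip: of_nat_le_iff)
      then have "e \<le> sqrt (real ((k - 1) div 64 + 1) / real n) / 48"
        by (rule e_le)
      moreover have "(k - 1) div 64 + 1 \<le> n" "k - 1 \<le> n"
        using k by linarith+
      ultimately show ?thesis
        by (intro blocking_code.hard_instance[OF code])
    next
      case False
      then have "e \<le> sqrt (real (0 + 1) / real n) / 48"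
        by (intro e_le) simp
      moreover have code: "blocking_code k 1 0 {\<lambda>i. if i = 0 then 1 else 0} (\<lambda>_ _. 0)"
        using k by (intro blocking_code_trivial) simp
      ultimately show ?thesis
        using k by (intro blocking_code.hard_instance[OF code]) auto
    qed
    then show "\<exists>m. 5 * real n \<le> real m \<and> real m \<le> 5 * real n \<and>
      lower_bound_instance k n m 1 (c * sqrt (real k / real n) / (1 + ln (real n)) powr 0)"
      unfolding e_def by (intro exI[of _ "5 * n"]) simp
  qed
  show ?thesis
    by (intro exI[of _ c] exI[of _ "0::real"] exI[of _ "1::real"] exI[of _ "5::real"] exI[of _ "5::real"]
        conjI instances[unfolded lower_bound_instance_def]) (simp_all add: c_def)
qed

end
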